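(* Let $\varepsilon>0$, $p\in(0,1/2)$ and $R=1-H(p)-\varepsilon$. Let $\mathcal{C}\subseteq\mathbb{F}_2^n$ be a random linear code of rate $R$. Then with probability $1-\exp(-\Omega_\varepsilon(n))$, the code $\mathcal{C}$ is $\left(p,\frac{H(p)}{\varepsilon}+2\right)$-list decodable.
   Context: $H(p)=-p\log_2 p-(1-p)\log_2(1-p)$ is the binary entropy function. For $x,y\in\mathbb{F}_2^n$, $\Delta(x,y)$ is the Hamming distance (number of coordinates in which $x,y$ differ), and $\mathcal{B}(x,r)=\{y\in\mathbb{F}_2^n:\Delta(x,y)\le r\}$. For a code $\mathcal{C}\subseteq\mathbb{F}_2^n$, the list size at $x$ is $L_{\mathcal{C}}(x)=|\mathcal{B}(x,pn)\cap\mathcal{C}|$; $\mathcal{C}$ is $(p,L)$-list decodable if $L_{\mathcal{C}}(x)\le L$ for all $x\in\mathbb{F}_2^n$. A random linear code of rate $R$ is $\mathcal{C}=\mathrm{span}(b_1,\dots,b_k)$ where $k=Rn$ (assumed an integer) and $b_1,\dots,b_k$ are independent uniformly random vectors in $\mathbb{F}_2^n$. The $\Omega_\varepsilon(\cdot)$ hides a constant depending only on $\varepsilon$ (asymptotics as $n\to\infty$). *)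

theory Defs
  imports "HOL-Probability.Probability"
begin

text \<open>Vectors of F_2^n are boolean lists of length n (True = 1).\<close>

definition bin_entropy :: "real \<Rightarrow> real" where
  "bin_entropy p = - p * log 2 p - (1 - p) * log 2 (1 - p)"

definition vecs :: "nat \<Rightarrow> bool list set" where
  "vecs n = {x. length x = n}"

definition hdist :: "bool list \<Rightarrow> bool list \<Rightarrow> nat" where
  "hdist x y = card {i. i < length x \<and> x ! i \<noteq> y ! i}"

definition hball :: "nat \<Rightarrow> bool list \<Rightarrow> real \<Rightarrow> bool list set" where
  "hball n x r = {y \<in> vecs n. real (hdist x y) \<le> r}"

definition lin_span :: "nat \<Rightarrow> bool list list \<Rightarrow> bool list set" where
  "lin_span n bs = {map (\<lambda>j. odd (card {i \<in> S. bs ! i ! j})) [0..<n] | S. S \<subseteq> {0..<length bs}}"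

definition list_size :: "nat \<Rightarrow> real \<Rightarrow> bool list set \<Rightarrow> bool list \<Rightarrow> nat" where
  "list_size n p C x = card (hball n x (p * real n) \<inter> C)"

definition list_decodable :: "nat \<Rightarrow> real \<Rightarrow> real \<Rightarrow> bool list set \<Rightarrow> bool" where
  "list_decodable n p L C \<longleftrightarrow> (\<forall>x \<in> vecs n. real (list_size n p C x) \<le> L)"

definition random_gens :: "nat \<Rightarrow> nat \<Rightarrow> bool list list pmf" where
  "random_gens n k = pmf_of_set {bs. length bs = k \<and> (\<forall>b \<in> set bs. b \<in> vecs n)}"

end

theory Submission
  imports Defs "HOL-Real_Asymp.Real_Asymp"
begin

text \<open>
  The code is built one random generator at a time while the potential
  \<open>\<Psi>(C) = \<Sum>\<^sub>x F(L\<^sub>C(x))\<close>, \<open>F(t) = q\<^sup>t - 1 - (q - 1) t\<close>, of the list sizes \<open>L\<^sub>C(x)\<close> is tracked.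
  Adding a generator \<open>b\<close> turns \<open>C\<close> into \<open>C \<union> (b + C)\<close>, so \<open>L(x)\<close> grows to at most
  \<open>L(x) + L(x + b)\<close>, and \<open>F(a + b) = F(a) + F(b) + (q\<^sup>a - 1)(q\<^sup>b - 1)\<close> gives
  \<open>\<Psi>(C \<union> (b + C)) \<le> 2\<Psi>(C) + X\<^sub>b\<close>, where the cross terms \<open>X\<^sub>b\<close> average to
  \<open>(\<Sum>\<^sub>x (q\<^bsup>L(x)\<^esup> - 1))\<^sup>2 / 2\<^sup>n\<close> over \<open>b\<close>. By Markov's inequality, with probability at
  least \<open>1 - k/T\<close> no generator makes \<open>X\<^sub>b\<close> exceed \<open>T\<close> times its mean. In that case the ball
  bound \<open>|B(x, pn)| \<le> U = 2\<^bsup>H(p) n\<^esup>\<close> controls the mean, and induction gives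
  \<open>\<Psi>(C) \<le> |C| \<delta> 2\<^sup>k\<close> with \<open>\<delta> = 2 T q\<^sup>2 U\<^sup>2 / 2\<^sup>n\<close>. Translating by codewords shows
  \<open>\<Psi>(C) \<ge> |C| F(L(x))\<close> for every \<open>x\<close>, so a list of size \<open>m \<ge> 2\<close> forces \<open>q\<^sup>m / 2 \<le> \<delta> 2\<^sup>k\<close>.
  With \<open>q = 2\<^bsup>(\<epsilon> - \<gamma>) n\<^esup>\<close>, \<open>T = 2\<^bsup>\<gamma> n / 2\<^esup>\<close> and \<open>\<gamma> = \<epsilon>\<^sup>2 / 2\<close> this excludes
  \<open>m > H(p)/\<epsilon> + 2\<close>.
\<close>

definition vec_xor :: "bool list \<Rightarrow> bool list \<Rightarrow> bool list" where
  "vec_xor x y = map2 (\<noteq>) x y"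

lemma length_vec_xor [simp]: "length (vec_xor x y) = min (length x) (length y)"
  by (simp add: vec_xor_def)

lemma nth_vec_xor [simp]:
  "i < length x \<Longrightarrow> i < length y \<Longrightarrow> vec_xor x y ! i = (x ! i \<noteq> y ! i)"
  by (simp add: vec_xor_def)

lemma mem_vecs_iff [simp]: "x \<in> vecs n \<longleftrightarrow> length x = n"
  by (simp add: vecs_def)

lemma vec_xor_cancel_right: "length x = length y \<Longrightarrow> vec_xor (vec_xor x y) y = x"
  by (auto simp: list_eq_iff_nth_eq)

lemma vec_xor_cancel_left: "length x = length y \<Longrightarrow> vec_xor y (vec_xor y x) = x"
  by (auto simp: list_eq_iff_nth_eq)

lemma vecs_eq_lists: "vecs n = {xs. set xs \<subseteq> (UNIV :: bool set) \<and> length xs = n}"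
  by auto

lemma finite_vecs [simp]: "finite (vecs n)"
  unfolding vecs_eq_lists by (rule finite_lists_length_eq) simp

lemma card_vecs: "card (vecs n) = 2 ^ n"
  using card_lists_length_eq[of "UNIV :: bool set" n] unfolding vecs_eq_lists by simp

lemma bij_betw_vec_xor_right: "b \<in> vecs n \<Longrightarrow> bij_betw (\<lambda>x. vec_xor x b) (vecs n) (vecs n)"
  by (rule bij_betwI[where g = "\<lambda>x. vec_xor x b"]) (auto simp: vec_xor_cancel_right)

lemma bij_betw_vec_xor_left: "x \<in> vecs n \<Longrightarrow> bij_betw (vec_xor x) (vecs n) (vecs n)"
  by (rule bij_betwI[where g = "vec_xor x"]) (auto simp: vec_xor_cancel_left)

lemma inj_on_vec_xor_left: "x \<in> vecs n \<Longrightarrow> C \<subseteq> vecs n \<Longrightarrow> inj_on (vec_xor x) C"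
  using bij_betw_imp_inj_on[OF bij_betw_vec_xor_left] inj_on_subset by blast

lemma hdist_vec_xor_right:
  "length x = length c \<Longrightarrow> length y = length c \<Longrightarrow> hdist (vec_xor x c) (vec_xor y c) = hdist x y"
  unfolding hdist_def by (intro arg_cong[where f = card]) auto

lemma hdist_vec_xor_shift:
  "length b = length x \<Longrightarrow> length c = length x \<Longrightarrow> hdist x (vec_xor b c) = hdist (vec_xor x b) c"
  unfolding hdist_def by (intro arg_cong[where f = card]) auto

lemma hdist_commute: "length x = length y \<Longrightarrow> hdist x y = hdist y x"
  unfolding hdist_def by (intro arg_cong[where f = card]) auto

lemma hdist_le_length: "hdist x y \<le> length x"
  unfolding hdist_def by (rule order.trans[OF card_mono card_lessThan[THEN eq_imp_le]]) auto

lemma hdist_Cons: "hdist (a # x) (b # y) = (if a = b then 0 else 1) + hdist x y"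
proof -
  have "{i. i < length (a # x) \<and> (a # x) ! i \<noteq> (b # y) ! i}
      = (if a = b then {} else {0}) \<union> Suc ` {i. i < length x \<and> x ! i \<noteq> y ! i}"
    by (auto simp: image_iff less_Suc_eq_0_disj)
  then show ?thesis
    unfolding hdist_def by (simp add: card_Un_disjoint card_image)
qed

definition lin_comb :: "nat \<Rightarrow> bool list list \<Rightarrow> nat set \<Rightarrow> bool list" where
  "lin_comb n bs S = map (\<lambda>j. odd (card {i \<in> S. bs ! i ! j})) [0..<n]"

lemma lin_span_eq: "lin_span n bs = lin_comb n bs ` Pow {0..<length bs}"
  unfolding lin_span_def lin_comb_def by auto

lemma length_lin_comb [simp]: "length (lin_comb n bs S) = n"
  by (simp add: lin_comb_def)

lemma odd_card_sym_diff:
  assumes "finite A" "finite B"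
  shows "odd (card (sym_diff A B)) \<longleftrightarrow> odd (card A) \<noteq> odd (card B)"
proof -
  have "card (sym_diff A B) = card (A - B) + card (B - A)"
    using assms by (intro card_Un_disjoint) auto
  then have "card (sym_diff A B) + 2 * card (A \<inter> B) = card A + card B"
    using assms card_Int_Diff[of A B] card_Int_Diff[of B A] by (simp add: Int_commute)
  then show ?thesis by presburger
qed

lemma vec_xor_lin_comb:
  assumes "finite S" "finite S'"
  shows "vec_xor (lin_comb n bs S) (lin_comb n bs S') = lin_comb n bs (sym_diff S S')"
proof (rule nth_equalityI)
  fix j assume "j < length (vec_xor (lin_comb n bs S) (lin_comb n bs S'))"
  moreover have "{i \<in> sym_diff S S'. bs ! i ! j} = sym_diff {i \<in> S. bs ! i ! j} {i \<in> S'. bs ! i ! j}"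
    by auto
  ultimately show "vec_xor (lin_comb n bs S) (lin_comb n bs S') ! j = lin_comb n bs (sym_diff S S') ! j"
    using assms by (simp add: lin_comb_def odd_card_sym_diff)
qed simp

definition xor_closed :: "bool list set \<Rightarrow> bool" where
  "xor_closed C \<longleftrightarrow> (\<forall>u \<in> C. \<forall>v \<in> C. vec_xor u v \<in> C)"

lemma xor_closed_lin_span: "xor_closed (lin_span n bs)"
  unfolding xor_closed_def lin_span_eq
  by (auto simp: vec_xor_lin_comb finite_subset intro!: imageI)

lemma lin_span_subset_vecs: "lin_span n bs \<subseteq> vecs n"
  unfolding lin_span_eq by auto

lemma finite_lin_span [simp]: "finite (lin_span n bs)"
  unfolding lin_span_eq by simp

lemma card_lin_span_le: "card (lin_span n bs) \<le> 2 ^ length bs"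
  unfolding lin_span_eq by (rule order.trans[OF card_image_le]) (simp_all add: card_Pow)

lemma card_lin_span_pos: "card (lin_span n bs) > 0"
  unfolding lin_span_eq by (auto simp: card_gt_0_iff)

lemma lin_comb_snoc:
  assumes "S \<subseteq> {0..<length bs}" "length b = n"
  shows "lin_comb n (bs @ [b]) S = lin_comb n bs S"
    and "lin_comb n (bs @ [b]) (insert (length bs) S) = vec_xor b (lin_comb n bs S)"
proof -
  show "lin_comb n (bs @ [b]) S = lin_comb n bs S"
    unfolding lin_comb_def using assms(1)
    by (intro map_cong refl arg_cong[where f = odd] arg_cong[where f = card]) (auto simp: nth_append)
  have fin: "finite {i \<in> S. bs ! i ! j}" for j
    using assms(1) by (auto intro: finite_subset)
  have "{i \<in> insert (length bs) S. (bs @ [b]) ! i ! j}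
      = (if b ! j then insert (length bs) {i \<in> S. bs ! i ! j} else {i \<in> S. bs ! i ! j})" for j
    using assms(1) by (auto simp: nth_append)
  moreover have "length bs \<notin> {i \<in> S. bs ! i ! j}" for j
    using assms(1) by auto
  ultimately show "lin_comb n (bs @ [b]) (insert (length bs) S) = vec_xor b (lin_comb n bs S)"
    using assms(2) fin by (intro nth_equalityI) (simp_all add: lin_comb_def)
qed

lemma lin_span_snoc:
  assumes "length b = n"
  shows "lin_span n (bs @ [b]) = lin_span n bs \<union> vec_xor b ` lin_span n bs"
proof -
  let ?P = "Pow {0..<length bs}"
  have "Pow {0..<length (bs @ [b])} = ?P \<union> insert (length bs) ` ?P"
    by (simp add: atLeast0_lessThan_Suc Pow_insert)
  moreover have "lin_comb n (bs @ [b]) ` ?P = lin_comb n bs ` ?P"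
    using lin_comb_snoc(1)[OF _ assms] by (intro image_cong) auto
  moreover have "lin_comb n (bs @ [b]) ` insert (length bs) ` ?P = vec_xor b ` lin_comb n bs ` ?P"
    unfolding image_image using lin_comb_snoc(2)[OF _ assms] by (intro image_cong) auto
  ultimately show ?thesis
    unfolding lin_span_eq by (simp only: image_Un)
qed

lemma union_translate_eq_self:
  "xor_closed C \<Longrightarrow> b \<in> C \<Longrightarrow> C \<union> vec_xor b ` C = C"
  unfolding xor_closed_def by blast

lemma card_union_translate:
  assumes "xor_closed C" "C \<subseteq> vecs n" "b \<in> vecs n" "b \<notin> C"
  shows "card (C \<union> vec_xor b ` C) = 2 * card C"
proof -
  have "C \<inter> vec_xor b ` C = {}"
  proof (rule ccontr)
    assume "C \<inter> vec_xor b ` C \<noteq> {}"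
    then obtain v where v: "v \<in> C" "vec_xor b v \<in> C" by blast
    then have "vec_xor (vec_xor b v) v \<in> C"
      using assms(1) unfolding xor_closed_def by blast
    moreover have "length v = length b"
      using v(1) assms(2,3) by (simp add: subset_iff)
    ultimately show False
      using assms(4) by (simp add: vec_xor_cancel_right)
  qed
  moreover have "finite C"
    using assms(2) by (rule finite_subset) simp
  ultimately have "card (C \<union> vec_xor b ` C) = card C + card (vec_xor b ` C)"
    by (intro card_Un_disjoint) simp_all
  also have "card (vec_xor b ` C) = card C"
    using inj_on_vec_xor_left[OF assms(3,2)] by (rule card_image)
  finally show ?thesis by simp
qed

lemma sum_bernoulli_weights_vecs:
  fixes p :: real
  shows "length x = n \<Longrightarrow> (\<Sum>y\<in>vecs n. p ^ hdist x y * (1 - p) ^ (n - hdist x y)) = 1"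
proof (induction x arbitrary: n)
  case Nil
  then have "vecs n = {[]}" by auto
  then show ?case using Nil by (simp add: hdist_def)
next
  case (Cons a x)
  then obtain m where m: "n = Suc m" "length x = m" by auto
  let ?w = "\<lambda>y. p ^ hdist x y * (1 - p) ^ (m - hdist x y)"
  have vecs_Suc: "vecs (Suc m) = (\<lambda>(a, y). a # y) ` (UNIV \<times> vecs m)"
    unfolding vecs_def by (auto simp: length_Suc_conv)
  have inj: "inj_on (\<lambda>(a, y). a # y) (UNIV \<times> vecs m)"
    by (auto simp: inj_on_def)
  have weight_Cons: "p ^ hdist (a # x) (b # y) * (1 - p) ^ (Suc m - hdist (a # x) (b # y))
      = (if a = b then 1 - p else p) * ?w y" for b y
  proof -
    have "Suc m - hdist x y = Suc (m - hdist x y)"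
      using hdist_le_length[of x y] m by simp
    then show ?thesis by (simp add: hdist_Cons)
  qed
  have "(\<Sum>y\<in>vecs n. p ^ hdist (a # x) y * (1 - p) ^ (n - hdist (a # x) y))
      = (\<Sum>(b, y)\<in>UNIV \<times> vecs m. p ^ hdist (a # x) (b # y) * (1 - p) ^ (Suc m - hdist (a # x) (b # y)))"
    unfolding m(1) vecs_Suc sum.reindex[OF inj] by (simp add: case_prod_beta)
  also have "\<dots> = (\<Sum>b\<in>UNIV. \<Sum>y\<in>vecs m. (if a = b then 1 - p else p) * ?w y)"
    by (simp add: weight_Cons sum.cartesian_product)
  also have "\<dots> = (\<Sum>b\<in>UNIV. if a = b then 1 - p else p)"
    using Cons.IH[OF m(2)] by (simp add: sum_distrib_left[symmetric])
  also have "\<dots> = 1"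
    by (cases a) (simp_all add: UNIV_bool)
  finally show ?case .
qed

lemma bernoulli_weight_ge:
  fixes p :: real and d n :: nat
  assumes "0 < p" "p < 1/2" "real d \<le> p * real n" "d \<le> n"
  shows "2 powr (- bin_entropy p * real n) \<le> p ^ d * (1 - p) ^ (n - d)"
proof -
  have "ln p < ln (1 - p)"
    using assms by simp
  then have "0 \<le> (real d - p * real n) * (ln p - ln (1 - p))"
    using assms(3) by (intro mult_nonpos_nonpos) auto
  also have "\<dots> = real d * ln p + real (n - d) * ln (1 - p) - real n * (p * ln p + (1 - p) * ln (1 - p))"
    using assms(4) by (simp add: of_nat_diff algebra_simps)
  finally have "real n * (p * ln p + (1 - p) * ln (1 - p)) \<le> real d * ln p + real (n - d) * ln (1 - p)"
    by simp
  moreover have "2 powr (- bin_entropy p * real n) = exp (real n * (p * ln p + (1 - p) * ln (1 - p)))"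
    unfolding bin_entropy_def powr_def log_def by (simp add: field_simps)
  moreover have "p ^ d * (1 - p) ^ (n - d) = exp (real d * ln p + real (n - d) * ln (1 - p))"
    using assms(1,2) by (simp add: exp_add exp_of_nat_mult)
  ultimately show ?thesis by simp
qed

lemma card_hball_le:
  assumes "0 < p" "p < 1/2" "c \<in> vecs n"
  shows "real (card (hball n c (p * real n))) \<le> 2 powr (bin_entropy p * real n)"
proof -
  let ?B = "hball n c (p * real n)"
  let ?w = "\<lambda>y. p ^ hdist c y * (1 - p) ^ (n - hdist c y)"
  have "real (card ?B) * 2 powr (- bin_entropy p * real n) = (\<Sum>y\<in>?B. 2 powr (- bin_entropy p * real n))"
    by simp
  also have "\<dots> \<le> (\<Sum>y\<in>?B. ?w y)"
    using assms hdist_le_length[of c] by (intro sum_mono bernoulli_weight_ge) (auto simp: hball_def)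
  also have "\<dots> \<le> (\<Sum>y\<in>vecs n. ?w y)"
    using assms by (intro sum_mono2) (auto simp: hball_def)
  also have "\<dots> = 1"
    using assms(3) by (simp add: sum_bernoulli_weights_vecs)
  finally show ?thesis
    by (simp add: powr_minus field_simps)
qed

lemma finite_hball [simp]: "finite (hball n x r)"
  unfolding hball_def by (rule finite_subset[of _ "vecs n"]) (auto simp del: mem_vecs_iff)

lemma list_size_union_translate_le:
  assumes "C \<subseteq> vecs n" "x \<in> vecs n" "b \<in> vecs n"
  shows "list_size n p (C \<union> vec_xor b ` C) x \<le> list_size n p C x + list_size n p C (vec_xor x b)"
proof -
  let ?r = "p * real n"
  have "hball n x ?r \<inter> (C \<union> vec_xor b ` C)
      \<subseteq> (hball n x ?r \<inter> C) \<union> vec_xor b ` (hball n (vec_xor x b) ?r \<inter> C)"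
  proof
    fix y assume y: "y \<in> hball n x ?r \<inter> (C \<union> vec_xor b ` C)"
    show "y \<in> (hball n x ?r \<inter> C) \<union> vec_xor b ` (hball n (vec_xor x b) ?r \<inter> C)"
    proof (cases "y \<in> C")
      case False
      then obtain c where c: "c \<in> C" "y = vec_xor b c"
        using y by blast
      then have "length c = n"
        using assms(1) by (simp add: subset_iff)
      then have "hdist x y = hdist (vec_xor x b) c"
        using c(2) assms(2,3) by (simp add: hdist_vec_xor_shift)
      then have "c \<in> hball n (vec_xor x b) ?r"
        using y \<open>length c = n\<close> unfolding hball_def by simp
      then show ?thesis
        using c by blast
    qed (use y in blast)
  qed
  then have "list_size n p (C \<union> vec_xor b ` C) x
      \<le> card ((hball n x ?r \<inter> C) \<union> vec_xor b ` (hball n (vec_xor x b) ?r \<inter> C))"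
    unfolding list_size_def by (intro card_mono) simp_all
  also have "\<dots> \<le> list_size n p C x + card (vec_xor b ` (hball n (vec_xor x b) ?r \<inter> C))"
    unfolding list_size_def by (rule card_Un_le)
  also have "\<dots> \<le> list_size n p C x + list_size n p C (vec_xor x b)"
    unfolding list_size_def by (intro add_left_mono card_image_le) simp
  finally show ?thesis .
qed

lemma list_size_le_translate:
  assumes "xor_closed C" "C \<subseteq> vecs n" "x \<in> vecs n" "c \<in> C"
  shows "list_size n p C x \<le> list_size n p C (vec_xor x c)"
proof -
  let ?r = "p * real n"
  have c: "c \<in> vecs n"
    using assms(2,4) by blast
  have "(\<lambda>y. vec_xor y c) ` (hball n x ?r \<inter> C) \<subseteq> hball n (vec_xor x c) ?r \<inter> C"
  proof
    fix z assume "z \<in> (\<lambda>y. vec_xor y c) ` (hball n x ?r \<inter> C)"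
    then obtain y where y: "y \<in> hball n x ?r" "y \<in> C" "z = vec_xor y c"
      by blast
    have "length y = n"
      using y(1) unfolding hball_def by simp
    then have "hdist (vec_xor x c) z = hdist x y"
      using y(3) c assms(3) by (simp add: hdist_vec_xor_right)
    moreover have "z \<in> C"
      using y(2,3) assms(1,4) unfolding xor_closed_def by blast
    ultimately show "z \<in> hball n (vec_xor x c) ?r \<inter> C"
      using y(1,3) c \<open>length y = n\<close> unfolding hball_def by simp
  qed
  moreover have "inj_on (\<lambda>y. vec_xor y c) (hball n x ?r \<inter> C)"
    using bij_betw_imp_inj_on[OF bij_betw_vec_xor_right[OF c]]
    by (rule inj_on_subset) (auto simp: hball_def)
  ultimately show ?thesis
    unfolding list_size_def by (intro card_inj_on_le) simp_all
qed

lemma sum_list_size_le: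
  assumes "C \<subseteq> vecs n" "\<And>c. c \<in> vecs n \<Longrightarrow> real (card (hball n c (p * real n))) \<le> U"
  shows "real (\<Sum>x\<in>vecs n. list_size n p C x) \<le> real (card C) * U"
proof -
  let ?r = "p * real n"
  let ?near = "\<lambda>x c. if real (hdist x c) \<le> ?r then 1 else 0 :: nat"
  have fin: "finite C"
    using assms(1) by (rule finite_subset) simp
  have "(\<Sum>x\<in>vecs n. list_size n p C x) = (\<Sum>x\<in>vecs n. \<Sum>c\<in>C. ?near x c)"
  proof (rule sum.cong[OF refl])
    fix x assume "x \<in> vecs n"
    then have "hball n x ?r \<inter> C = {c \<in> C. real (hdist x c) \<le> ?r}"
      using assms(1) unfolding hball_def by auto
    then show "list_size n p C x = (\<Sum>c\<in>C. ?near x c)"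
      unfolding list_size_def using fin by (simp add: sum.If_cases Int_def)
  qed
  also have "\<dots> = (\<Sum>c\<in>C. \<Sum>x\<in>vecs n. ?near x c)"
    by (rule sum.swap)
  also have "\<dots> = (\<Sum>c\<in>C. card (hball n c ?r))"
  proof (rule sum.cong[OF refl])
    fix c assume "c \<in> C"
    then have "hball n c ?r = {x \<in> vecs n. real (hdist x c) \<le> ?r}"
      using assms(1) hdist_commute unfolding hball_def by auto
    then show "(\<Sum>x\<in>vecs n. ?near x c) = card (hball n c ?r)"
      by (simp add: sum.If_cases Int_def del: mem_vecs_iff)
  qed
  finally have "real (\<Sum>x\<in>vecs n. list_size n p C x) = (\<Sum>c\<in>C. real (card (hball n c ?r)))"
    by simp
  also have "\<dots> \<le> (\<Sum>c\<in>C. U)"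
    using assms by (intro sum_mono) auto
  finally show ?thesis by simp
qed

text \<open>\<open>pot q\<close> is convex and vanishes at \<open>0\<close> and \<open>1\<close>, so the potential only sees lists of size at least \<open>2\<close>.\<close>

definition pot :: "real \<Rightarrow> nat \<Rightarrow> real" where
  "pot q t = q ^ t - 1 - (q - 1) * real t"

lemma pot_add: "pot q (a + b) = pot q a + pot q b + (q ^ a - 1) * (q ^ b - 1)"
  unfolding pot_def by (simp add: power_add algebra_simps)

lemma pot_mono:
  assumes "q \<ge> 1" "s \<le> t"
  shows "pot q s \<le> pot q t"
proof -
  have "pot q t \<le> pot q (Suc t)" for t
  proof -
    have "pot q (Suc t) - pot q t = (q - 1) * (q ^ t - 1)"
      unfolding pot_def by (simp add: algebra_simps)
    also have "\<dots> \<ge> 0"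
      using assms(1) by (simp add: one_le_power)
    finally show ?thesis by simp
  qed
  then show ?thesis
    using lift_Suc_mono_le[of "pot q"] assms(2) by blast
qed

lemma pot_nonneg: "q \<ge> 1 \<Longrightarrow> pot q t \<ge> 0"
  using pot_mono[of q 0 t] by (simp add: pot_def)

lemma pot_le_1: "t \<le> 1 \<Longrightarrow> pot q t = 0"
  by (cases t) (auto simp: pot_def)

lemma pot_ge_half_power:
  assumes "q \<ge> 4" "m \<ge> 2"
  shows "q ^ m / 2 \<le> pot q m"
proof -
  have "2 * real m \<le> 4 ^ (m - 1)"
    using assms(2)
  proof (induction m rule: dec_induct)
    case (step j)
    then have "(4::real) ^ (Suc j - 1) = 4 * 4 ^ (j - 1)"
      by (cases j) auto
    then show ?case
      using step by simp
  qed simp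
  also have "(4::real) ^ (m - 1) \<le> q ^ (m - 1)"
    using assms(1) by (intro power_mono) auto
  finally have "q * (2 * real m) \<le> q ^ m"
    using assms by (cases m) (auto intro: mult_left_mono)
  then show ?thesis
    using assms unfolding pot_def by (simp add: algebra_simps)
qed

definition potential :: "nat \<Rightarrow> real \<Rightarrow> real \<Rightarrow> bool list set \<Rightarrow> real" where
  "potential n p q C = (\<Sum>x\<in>vecs n. pot q (list_size n p C x))"

definition list_weight :: "nat \<Rightarrow> real \<Rightarrow> real \<Rightarrow> bool list set \<Rightarrow> bool list \<Rightarrow> real" where
  "list_weight n p q C x = q ^ list_size n p C x - 1"

definition cross_term :: "nat \<Rightarrow> real \<Rightarrow> real \<Rightarrow> bool list set \<Rightarrow> bool list \<Rightarrow> real" where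
  "cross_term n p q C b = (\<Sum>x\<in>vecs n. list_weight n p q C x * list_weight n p q C (vec_xor x b))"

definition bad_direction :: "nat \<Rightarrow> real \<Rightarrow> real \<Rightarrow> real \<Rightarrow> bool list set \<Rightarrow> bool list \<Rightarrow> bool" where
  "bad_direction n p q T C b \<longleftrightarrow> cross_term n p q C b > T * (\<Sum>x\<in>vecs n. list_weight n p q C x)\<^sup>2 / 2 ^ n"

lemma list_weight_nonneg: "q \<ge> 1 \<Longrightarrow> list_weight n p q C x \<ge> 0"
  unfolding list_weight_def by (simp add: one_le_power)

lemma potential_union_translate_le:
  assumes "C \<subseteq> vecs n" "b \<in> vecs n" "q \<ge> 1"
  shows "potential n p q (C \<union> vec_xor b ` C) \<le> 2 * potential n p q C + cross_term n p q C b"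
proof -
  let ?L = "list_size n p C"
  have "potential n p q (C \<union> vec_xor b ` C) \<le> (\<Sum>x\<in>vecs n. pot q (?L x + ?L (vec_xor x b)))"
    unfolding potential_def using assms by (intro sum_mono pot_mono list_size_union_translate_le) auto
  also have "\<dots> = potential n p q C + (\<Sum>x\<in>vecs n. pot q (?L (vec_xor x b))) + cross_term n p q C b"
    unfolding pot_add potential_def cross_term_def list_weight_def by (simp add: sum.distrib)
  also have "(\<Sum>x\<in>vecs n. pot q (?L (vec_xor x b))) = potential n p q C"
    unfolding potential_def using sum.reindex_bij_betw[OF bij_betw_vec_xor_right[OF assms(2)]] by simp
  finally show ?thesis by simp
qed

lemma sum_list_weight:
  "(\<Sum>x\<in>vecs n. list_weight n p q C x)
    = potential n p q C + (q - 1) * real (\<Sum>x\<in>vecs n. list_size n p C x)"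
  unfolding list_weight_def potential_def pot_def
  by (simp add: sum.distrib sum_distrib_left sum_subtractf)

lemma sum_cross_term:
  "(\<Sum>b\<in>vecs n. cross_term n p q C b) = (\<Sum>x\<in>vecs n. list_weight n p q C x)\<^sup>2"
proof -
  let ?w = "list_weight n p q C"
  have "(\<Sum>b\<in>vecs n. cross_term n p q C b) = (\<Sum>x\<in>vecs n. ?w x * (\<Sum>b\<in>vecs n. ?w (vec_xor x b)))"
    unfolding cross_term_def by (subst sum.swap) (simp add: sum_distrib_left)
  also have "\<dots> = (\<Sum>x\<in>vecs n. ?w x * (\<Sum>y\<in>vecs n. ?w y))"
    using sum.reindex_bij_betw[OF bij_betw_vec_xor_left, of _ n ?w] by (intro sum.cong) simp_all
  also have "\<dots> = (\<Sum>x\<in>vecs n. ?w x)\<^sup>2"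
    by (simp add: sum_distrib_right[symmetric] power2_eq_square)
  finally show ?thesis .
qed

lemma card_bad_direction_le:
  assumes "q \<ge> 1" "T > 0"
  shows "real (card {b \<in> vecs n. bad_direction n p q T C b}) \<le> 2 ^ n / T"
proof -
  let ?S = "\<Sum>x\<in>vecs n. list_weight n p q C x"
  let ?B = "{b \<in> vecs n. bad_direction n p q T C b}"
  have cross_nonneg: "cross_term n p q C b \<ge> 0" for b
    unfolding cross_term_def using list_weight_nonneg[OF assms(1)]
    by (intro sum_nonneg mult_nonneg_nonneg) auto
  have "real (card ?B) * (T * ?S\<^sup>2 / 2 ^ n) \<le> (\<Sum>b\<in>?B. cross_term n p q C b)"
    using sum_mono[of ?B "\<lambda>_. T * ?S\<^sup>2 / 2 ^ n" "cross_term n p q C"]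
    by (simp add: bad_direction_def)
  also have "\<dots> \<le> (\<Sum>b\<in>vecs n. cross_term n p q C b)"
    using cross_nonneg by (intro sum_mono2) auto
  also have "\<dots> = ?S\<^sup>2"
    by (rule sum_cross_term)
  finally have markov: "real (card ?B) * T * ?S\<^sup>2 \<le> 2 ^ n * ?S\<^sup>2"
    by (simp add: field_simps)
  show ?thesis
  proof (cases "?S = 0")
    case True
    then have "\<forall>b\<in>vecs n. cross_term n p q C b = 0"
      using sum_cross_term[of n p q C] cross_nonneg by (simp add: sum_nonneg_eq_0_iff)
    then have "?B = {}"
      using True by (auto simp: bad_direction_def)
    then have "card ?B = 0"
      by (simp only: card.empty)
    then show ?thesis
      using assms(2) by simp
  next
    case False
    then have "real (card ?B) * T \<le> 2 ^ n"
      using markov by (simp add: mult.assoc)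
    then show ?thesis
      using assms(2) by (simp add: field_simps)
  qed
qed

definition good_gens :: "nat \<Rightarrow> real \<Rightarrow> real \<Rightarrow> real \<Rightarrow> bool list list \<Rightarrow> bool" where
  "good_gens n p q T bs \<longleftrightarrow> (\<forall>i < length bs. \<not> bad_direction n p q T (lin_span n (take i bs)) (bs ! i))"

lemma good_gens_snoc:
  "good_gens n p q T (bs @ [b]) \<longleftrightarrow> good_gens n p q T bs \<and> \<not> bad_direction n p q T (lin_span n bs) b"
  unfolding good_gens_def by (auto simp: nth_append less_Suc_eq)

definition gen_lists :: "nat \<Rightarrow> nat \<Rightarrow> bool list list set" where
  "gen_lists n k = {bs. set bs \<subseteq> vecs n \<and> length bs = k}"

lemma finite_gen_lists [simp]: "finite (gen_lists n k)"
  unfolding gen_lists_def by (rule finite_lists_length_eq) simp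

lemma card_gen_lists: "card (gen_lists n k) = (2 ^ n) ^ k"
  unfolding gen_lists_def by (simp add: card_lists_length_eq card_vecs)

lemma gen_lists_Suc: "gen_lists n (Suc k) = (\<lambda>(bs, b). bs @ [b]) ` (gen_lists n k \<times> vecs n)"
proof
  show "gen_lists n (Suc k) \<subseteq> (\<lambda>(bs, b). bs @ [b]) ` (gen_lists n k \<times> vecs n)"
  proof
    fix xs assume xs: "xs \<in> gen_lists n (Suc k)"
    then have "xs \<noteq> []"
      by (auto simp: gen_lists_def)
    then have "xs = butlast xs @ [last xs]"
      by simp
    moreover have "butlast xs \<in> gen_lists n k" "last xs \<in> vecs n"
      using xs \<open>xs \<noteq> []\<close> by (auto simp: gen_lists_def in_set_butlastD simp del: mem_vecs_iff)
    ultimately show "xs \<in> (\<lambda>(bs, b). bs @ [b]) ` (gen_lists n k \<times> vecs n)"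
      by force
  qed
qed (auto simp: gen_lists_def simp del: mem_vecs_iff)

lemma card_not_good_gens_le:
  assumes "q \<ge> 1" "T > 0"
  shows "real (card {bs \<in> gen_lists n k. \<not> good_gens n p q T bs}) \<le> real k * (2 ^ n) ^ k / T"
proof (induction k)
  case 0
  have "{bs \<in> gen_lists n 0. \<not> good_gens n p q T bs} = {}"
    by (auto simp: gen_lists_def good_gens_def)
  then show ?case by simp
next
  case (Suc k)
  let ?A = "{bs \<in> gen_lists n k. \<not> good_gens n p q T bs} \<times> vecs n"
  let ?S = "Sigma (gen_lists n k) (\<lambda>bs. {b \<in> vecs n. bad_direction n p q T (lin_span n bs) b})"
  have "{bs \<in> gen_lists n (Suc k). \<not> good_gens n p q T bs} \<subseteq> (\<lambda>(bs, b). bs @ [b]) ` (?A \<union> ?S)"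
    unfolding gen_lists_Suc by (auto simp: good_gens_snoc)
  moreover have "finite (?A \<union> ?S)"
    by (intro finite_UnI finite_cartesian_product finite_SigmaI) (auto simp del: mem_vecs_iff)
  ultimately have "card {bs \<in> gen_lists n (Suc k). \<not> good_gens n p q T bs} \<le> card (?A \<union> ?S)"
    by (meson card_image_le card_mono finite_imageI order_trans)
  also have "\<dots> \<le> card ?A + card ?S"
    by (rule card_Un_le)
  finally have "real (card {bs \<in> gen_lists n (Suc k). \<not> good_gens n p q T bs})
      \<le> real (card ?A) + real (card ?S)"
    by linarith
  also have "real (card ?A) \<le> real k * (2 ^ n) ^ k / T * 2 ^ n"
    using mult_right_mono[OF Suc.IH, of "2 ^ n"] by (simp add: card_cartesian_product card_vecs)
  also have "real (card ?S) = (\<Sum>bs\<in>gen_lists n k. real (card {b \<in> vecs n. bad_direction n p q T (lin_span n bs) b}))"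
    by (subst card_SigmaI) (auto simp del: mem_vecs_iff)
  also have "\<dots> \<le> (\<Sum>bs\<in>gen_lists n k. 2 ^ n / T)"
    by (intro sum_mono card_bad_direction_le assms)
  also have "real k * (2 ^ n) ^ k / T * 2 ^ n + (\<Sum>bs\<in>gen_lists n k. 2 ^ n / T) = real (Suc k) * (2 ^ n) ^ Suc k / T"
    using assms(2) by (simp add: card_gen_lists field_simps)
  finally show ?case by simp
qed

lemma list_size_le_card: "finite C \<Longrightarrow> list_size n p C x \<le> card C"
  unfolding list_size_def by (intro card_mono) auto

lemma cross_term_le_if_not_bad:
  assumes "q \<ge> 1" "T > 0" "U \<ge> 0" "C \<subseteq> vecs n"
    and ball: "\<And>c. c \<in> vecs n \<Longrightarrow> real (card (hball n c (p * real n))) \<le> U"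
    and "potential n p q C \<le> real (card C) * (q * U)"
    and "\<not> bad_direction n p q T C b"
  shows "cross_term n p q C b \<le> T * (2 * real (card C) * q * U)\<^sup>2 / 2 ^ n"
proof -
  let ?S = "\<Sum>x\<in>vecs n. list_weight n p q C x"
  have "?S = potential n p q C + (q - 1) * real (\<Sum>x\<in>vecs n. list_size n p C x)"
    by (rule sum_list_weight)
  also have "\<dots> \<le> real (card C) * (q * U) + (q - 1) * (real (card C) * U)"
    using assms(1,6) sum_list_size_le[OF assms(4) ball] by (intro add_mono mult_left_mono) auto
  also have "\<dots> \<le> 2 * real (card C) * q * U"
    using assms(3) by (simp add: algebra_simps)
  finally have "?S\<^sup>2 \<le> (2 * real (card C) * q * U)\<^sup>2"
    using list_weight_nonneg[OF assms(1)] by (intro power_mono) (auto intro: sum_nonneg)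
  then have "T * ?S\<^sup>2 / 2 ^ n \<le> T * (2 * real (card C) * q * U)\<^sup>2 / 2 ^ n"
    using assms(2) by (intro divide_right_mono mult_left_mono) auto
  then show ?thesis
    using assms(7) unfolding bad_direction_def by linarith
qed

lemma potential_lin_span_snoc_le:
  fixes q T U :: real and n :: nat
  defines "\<delta> \<equiv> 2 * T * q\<^sup>2 * U\<^sup>2 / 2 ^ n"
  assumes q: "q \<ge> 1" and T: "T > 0" and U: "U \<ge> 0" and b: "b \<in> vecs n"
    and ball: "\<And>c. c \<in> vecs n \<Longrightarrow> real (card (hball n c (p * real n))) \<le> U"
    and not_bad: "\<not> bad_direction n p q T (lin_span n bs) b"
    and IH: "potential n p q (lin_span n bs) \<le> real (card (lin_span n bs)) * \<delta> * (2 ^ length bs - 1)"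
    and budget: "\<delta> * 2 ^ length bs \<le> q * U"
  shows "potential n p q (lin_span n (bs @ [b]))
    \<le> real (card (lin_span n (bs @ [b]))) * \<delta> * (2 ^ length (bs @ [b]) - 1)"
proof -
  let ?C = "lin_span n bs"
  have C: "?C \<subseteq> vecs n"
    by (rule lin_span_subset_vecs)
  have "\<delta> \<ge> 0"
    using T by (simp add: \<delta>_def)
  have card_C: "real (card ?C) \<le> 2 ^ length bs"
    using card_lin_span_le[of n bs] by (simp add: of_nat_le_iff[symmetric])
  have "potential n p q ?C \<le> real (card ?C) * (q * U)"
    using IH budget \<open>\<delta> \<ge> 0\<close> mult_left_mono[of "\<delta> * (2 ^ length bs - 1)" "q * U" "real (card ?C)"]
    by (simp add: algebra_simps)
  then have "cross_term n p q ?C b \<le> T * (2 * real (card ?C) * q * U)\<^sup>2 / 2 ^ n"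
    using cross_term_le_if_not_bad[OF q T U C ball _ not_bad] by simp
  also have "\<dots> = 2 * real (card ?C) * \<delta> * real (card ?C)"
    by (simp add: \<delta>_def power2_eq_square field_simps)
  also have "\<dots> \<le> 2 * real (card ?C) * \<delta> * 2 ^ length bs"
    using card_C \<open>\<delta> \<ge> 0\<close> by (intro mult_left_mono) auto
  finally have cross: "cross_term n p q ?C b \<le> 2 * real (card ?C) * \<delta> * 2 ^ length bs" .
  show ?thesis
  proof (cases "b \<in> ?C")
    case True
    then have "lin_span n (bs @ [b]) = ?C"
      using lin_span_snoc[of b n bs] b union_translate_eq_self[OF xor_closed_lin_span] by simp
    moreover have "real (card ?C) * \<delta> * (2 ^ length bs - 1) \<le> real (card ?C) * \<delta> * (2 ^ Suc (length bs) - 1)"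
      using \<open>\<delta> \<ge> 0\<close> by (intro mult_left_mono) auto
    ultimately show ?thesis
      using IH by simp
  next
    case False
    have "potential n p q (lin_span n (bs @ [b])) \<le> 2 * potential n p q ?C + cross_term n p q ?C b"
      using b by (simp add: lin_span_snoc potential_union_translate_le[OF C b q])
    also have "\<dots> \<le> real (2 * card ?C) * \<delta> * (2 ^ length (bs @ [b]) - 1)"
      using IH cross by (simp add: algebra_simps)
    also have "2 * card ?C = card (lin_span n (bs @ [b]))"
      using b False by (simp add: lin_span_snoc card_union_translate[OF xor_closed_lin_span C])
    finally show ?thesis .
  qed
qed

lemma potential_good_gens_le:
  assumes "q \<ge> 1" "T > 0" "U \<ge> 0"
    and ball: "\<And>c. c \<in> vecs n \<Longrightarrow> real (card (hball n c (p * real n))) \<le> U"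
    and K: "2 * T * q\<^sup>2 * U\<^sup>2 / 2 ^ n * 2 ^ K \<le> q * U"
  shows "set bs \<subseteq> vecs n \<Longrightarrow> length bs \<le> K \<Longrightarrow> good_gens n p q T bs \<Longrightarrow>
    potential n p q (lin_span n bs)
      \<le> real (card (lin_span n bs)) * (2 * T * q\<^sup>2 * U\<^sup>2 / 2 ^ n) * (2 ^ length bs - 1)"
proof (induction bs rule: rev_induct)
  case Nil
  have "card (lin_span n []) = 1"
    by (simp add: lin_span_eq)
  then have "list_size n p (lin_span n []) x \<le> 1" for x
    using list_size_le_card[of "lin_span n []"] by simp
  then show ?case
    by (simp add: potential_def pot_le_1)
next
  case (snoc b bs)
  have "good_gens n p q T bs" and not_bad: "\<not> bad_direction n p q T (lin_span n bs) b"
    using snoc.prems(3) by (auto simp: good_gens_snoc)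
  then have IH: "potential n p q (lin_span n bs)
      \<le> real (card (lin_span n bs)) * (2 * T * q\<^sup>2 * U\<^sup>2 / 2 ^ n) * (2 ^ length bs - 1)"
    using snoc.IH snoc.prems(1,2) by simp
  have "(2::real) ^ length bs \<le> 2 ^ K"
    using snoc.prems(2) by (intro power_increasing) auto
  then have "2 * T * q\<^sup>2 * U\<^sup>2 / 2 ^ n * 2 ^ length bs \<le> q * U"
    using K assms(2) mult_left_mono[of "(2::real) ^ length bs" "2 ^ K" "2 * T * q\<^sup>2 * U\<^sup>2 / 2 ^ n"]
    by simp
  then show ?case
    using potential_lin_span_snoc_le[OF assms(1-3) _ ball not_bad IH] snoc.prems(1) by simp
qed

lemma card_mult_pot_le_potential:
  assumes "q \<ge> 1" "xor_closed C" "C \<subseteq> vecs n" "x \<in> vecs n"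
  shows "real (card C) * pot q (list_size n p C x) \<le> potential n p q C"
proof -
  have "real (card C) * pot q (list_size n p C x) \<le> (\<Sum>c\<in>C. pot q (list_size n p C (vec_xor x c)))"
    using sum_mono[of C "\<lambda>_. pot q (list_size n p C x)"] assms
    by (simp add: pot_mono list_size_le_translate)
  also have "\<dots> = (\<Sum>y\<in>vec_xor x ` C. pot q (list_size n p C y))"
    by (simp add: sum.reindex[OF inj_on_vec_xor_left[OF assms(4,3)]])
  also have "\<dots> \<le> potential n p q C"
    unfolding potential_def using assms(1,3,4) pot_nonneg by (intro sum_mono2) auto
  finally show ?thesis .
qed

lemma good_gens_list_decodable:
  assumes "q \<ge> 4" "T > 0" "U \<ge> 0" "L \<ge> 1"
    and ball: "\<And>c. c \<in> vecs n \<Longrightarrow> real (card (hball n c (p * real n))) \<le> U"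
    and K: "2 * T * q\<^sup>2 * U\<^sup>2 / 2 ^ n * 2 ^ k \<le> q * U"
    and L: "2 * T * q\<^sup>2 * U\<^sup>2 / 2 ^ n * 2 ^ k \<le> q powr L / 2"
    and bs: "set bs \<subseteq> vecs n" "length bs = k" "good_gens n p q T bs"
  shows "list_decodable n p L (lin_span n bs)"
  unfolding list_decodable_def
proof (intro ballI, rule ccontr)
  define \<delta> where "\<delta> = 2 * T * q\<^sup>2 * U\<^sup>2 / 2 ^ n"
  let ?C = "lin_span n bs"
  fix x assume x: "x \<in> vecs n"
  let ?m = "list_size n p ?C x"
  assume "\<not> real ?m \<le> L"
  then have "1 < ?m"
    using assms(4) by (simp flip: of_nat_less_iff)
  then have "?m \<ge> 2"
    by simp
  have "q powr L < q powr real ?m"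
    using \<open>\<not> real ?m \<le> L\<close> assms(1) by (simp add: powr_less_mono)
  then have "q powr L / 2 < q ^ ?m / 2"
    using assms(1) by (simp add: powr_realpow)
  also have "q ^ ?m / 2 \<le> pot q ?m"
    using pot_ge_half_power[OF assms(1) \<open>?m \<ge> 2\<close>] .
  also have "pot q ?m \<le> \<delta> * (2 ^ k - 1)"
  proof -
    have "real (card ?C) * pot q ?m \<le> potential n p q ?C"
      using assms(1) x by (intro card_mult_pot_le_potential xor_closed_lin_span lin_span_subset_vecs) auto
    also have "\<dots> \<le> real (card ?C) * (\<delta> * (2 ^ k - 1))"
      using potential_good_gens_le[OF _ assms(2,3) ball K bs(1) _ bs(3)] assms(1) bs(2)
      by (simp add: \<delta>_def mult.assoc)
    finally show ?thesis
      using card_lin_span_pos[of n bs] by simp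
  qed
  also have "\<dots> \<le> \<delta> * 2 ^ k"
    using assms(2) by (simp add: \<delta>_def right_diff_distrib)
  also have "\<dots> \<le> q powr L / 2"
    using L by (simp add: \<delta>_def)
  finally show False by simp
qed

lemma random_gens_eq: "random_gens n k = pmf_of_set (gen_lists n k)"
  unfolding random_gens_def gen_lists_def by (simp add: subset_code(1) conj_commute)

lemma prob_ge_if_good_gens:
  assumes "q \<ge> 1" "T > 0" "\<And>bs. bs \<in> gen_lists n k \<Longrightarrow> good_gens n p q T bs \<Longrightarrow> P bs"
  shows "measure_pmf.prob (random_gens n k) {bs. P bs} \<ge> 1 - real k / T"
proof -
  let ?G = "gen_lists n k"
  let ?B = "{bs \<in> ?G. \<not> good_gens n p q T bs}"
  have card_G: "real (card ?G) = (2 ^ n) ^ k"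
    by (simp add: card_gen_lists)
  then have "?G \<noteq> {}"
    by (metis card.empty of_nat_0 power_not_zero zero_neq_numeral)
  have "card ?G \<le> card ((?G \<inter> {bs. P bs}) \<union> ?B)"
    using assms(3) by (intro card_mono) auto
  also have "\<dots> \<le> card (?G \<inter> {bs. P bs}) + card ?B"
    by (rule card_Un_le)
  finally have "real (card ?G) - real (card ?B) \<le> real (card (?G \<inter> {bs. P bs}))"
    by linarith
  moreover have "real (card ?B) \<le> real (card ?G) * (real k / T)"
    using card_not_good_gens_le[OF assms(1,2)] card_G by (simp add: field_simps)
  ultimately have "real (card ?G) * (1 - real k / T) \<le> real (card (?G \<inter> {bs. P bs}))"
    by (simp add: right_diff_distrib)
  then have "1 - real k / T \<le> real (card (?G \<inter> {bs. P bs})) / real (card ?G)"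
    using card_G by (simp add: pos_le_divide_eq mult.commute)
  also have "\<dots> = measure_pmf.prob (random_gens n k) {bs. P bs}"
    using \<open>?G \<noteq> {}\<close> by (simp add: random_gens_eq measure_pmf_of_set Int_commute)
  finally show ?thesis .
qed

lemma bin_entropy_pos:
  assumes "0 < p" "p < 1"
  shows "bin_entropy p > 0"
proof -
  have "p * log 2 p < 0" "(1 - p) * log 2 (1 - p) < 0"
    using assms by (simp_all add: mult_pos_neg)
  then show ?thesis
    unfolding bin_entropy_def by linarith
qed

text \<open>\<open>E\<close> is \<open>log\<^sub>2 (\<delta> 2\<^sup>k)\<close> for the parameters of \<open>code_parameter_bounds\<close>, with \<open>m = n\<close>.\<close>

lemma exponent_bounds:
  fixes \<epsilon> \<gamma> H m k :: real
  assumes "0 < \<gamma>" "\<gamma> \<le> \<epsilon>\<^sup>2 / 2" "0 < H" "H + \<epsilon> \<le> 1" "2 \<le> \<gamma> * m" "8 \<le> \<epsilon> * m"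
    and k: "k = (1 - H - \<epsilon>) * m"
  defines "E \<equiv> 1 + \<gamma> * m / 2 + 2 * ((\<epsilon> - \<gamma>) * m) + 2 * (H * m) - m + k"
  shows "E \<le> (\<epsilon> - \<gamma>) * m + H * m" and "E \<le> (\<epsilon> - \<gamma>) * m * (H / \<epsilon> + 2) - 1"
proof -
  have "0 < \<gamma> * m"
    using assms(5) by linarith
  then have "0 < m"
    using assms(1) by (simp add: zero_less_mult_iff)
  then have "0 < H * m"
    using assms(3) by simp
  have "0 < \<epsilon> * m"
    using assms(6) by linarith
  then have "0 < \<epsilon>" and "\<epsilon> \<le> 1"
    using \<open>0 < m\<close> assms(3,4) by (simp_all add: zero_less_mult_iff)
  show "E \<le> (\<epsilon> - \<gamma>) * m + H * m"
    using assms(5) by (simp add: E_def k algebra_simps)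
  have "\<epsilon> * \<epsilon> \<le> \<epsilon>"
    using \<open>0 < \<epsilon>\<close> \<open>\<epsilon> \<le> 1\<close> by (simp add: mult_le_cancel_left1)
  then have "\<gamma> \<le> \<epsilon> / 2"
    using assms(2) by (simp add: power2_eq_square)
  have "\<gamma> / \<epsilon> \<le> \<epsilon> / 2"
    using divide_right_mono[OF assms(2), of \<epsilon>] \<open>0 < \<epsilon>\<close> by (simp add: power2_eq_square)
  moreover have "H * m \<le> m"
    using \<open>0 < m\<close> \<open>0 < \<epsilon>\<close> assms(4) by (simp add: mult_le_cancel_right1)
  ultimately have "\<gamma> / \<epsilon> * (H * m) \<le> \<epsilon> / 2 * m"
    using \<open>0 < \<epsilon>\<close> \<open>0 < H * m\<close> by (intro mult_mono) auto
  moreover have "\<gamma> * m / 2 \<le> \<epsilon> * m / 4"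
    using \<open>0 < m\<close> mult_right_mono[OF \<open>\<gamma> \<le> \<epsilon> / 2\<close>, of m] by simp
  moreover have "(\<epsilon> - \<gamma>) * m * (H / \<epsilon> + 2) = H * m - \<gamma> / \<epsilon> * (H * m) + 2 * \<epsilon> * m - 2 * \<gamma> * m"
    using \<open>0 < \<epsilon>\<close> by (simp add: field_simps)
  ultimately show "E \<le> (\<epsilon> - \<gamma>) * m * (H / \<epsilon> + 2) - 1"
    using assms(6) by (simp add: E_def k algebra_simps)
qed

lemma code_parameter_bounds:
  fixes \<epsilon> \<gamma> H :: real and n k :: nat
  defines "q \<equiv> (2::real) powr ((\<epsilon> - \<gamma>) * real n)" and "T \<equiv> (2::real) powr (\<gamma> * real n / 2)"
    and "U \<equiv> (2::real) powr (H * real n)"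
  assumes "0 < \<gamma>" "\<gamma> \<le> \<epsilon>\<^sup>2 / 2" "0 < H" "H + \<epsilon> \<le> 1" "2 \<le> \<gamma> * real n" "8 \<le> \<epsilon> * real n"
    and k: "real k = (1 - H - \<epsilon>) * real n"
  shows "2 * T * q\<^sup>2 * U\<^sup>2 / 2 ^ n * 2 ^ k \<le> q * U"
    and "2 * T * q\<^sup>2 * U\<^sup>2 / 2 ^ n * 2 ^ k \<le> q powr (H / \<epsilon> + 2) / 2"
proof -
  define s where "s = (\<epsilon> - \<gamma>) * real n"
  define E where "E = 1 + \<gamma> * real n / 2 + 2 * s + 2 * (H * real n) - real n + real k"
  have E: "E \<le> s + H * real n" "E \<le> s * (H / \<epsilon> + 2) - 1"
    using exponent_bounds[OF assms(4-9) k] unfolding E_def s_def by simp_all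
  have square: "((2::real) powr a)\<^sup>2 = 2 powr (2 * a)" for a
    by (simp add: power2_eq_square powr_add[symmetric])
  have "2 * T * q\<^sup>2 * U\<^sup>2 / 2 ^ n * 2 ^ k
      = 2 powr 1 * 2 powr (\<gamma> * real n / 2) * 2 powr (2 * s) * 2 powr (2 * (H * real n))
        / 2 powr real n * 2 powr real k"
    unfolding T_def q_def U_def s_def square by (simp add: powr_realpow)
  also have "\<dots> = 2 powr E"
    unfolding E_def by (simp add: powr_add powr_diff)
  finally have \<delta>: "2 * T * q\<^sup>2 * U\<^sup>2 / 2 ^ n * 2 ^ k = 2 powr E" .
  show "2 * T * q\<^sup>2 * U\<^sup>2 / 2 ^ n * 2 ^ k \<le> q * U"
    using E(1) unfolding \<delta> by (simp add: q_def U_def s_def powr_add[symmetric])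
  have "q powr (H / \<epsilon> + 2) / 2 = 2 powr (s * (H / \<epsilon> + 2) - 1)"
    by (simp add: q_def s_def powr_powr powr_diff)
  then show "2 * T * q\<^sup>2 * U\<^sup>2 / 2 ^ n * 2 ^ k \<le> q powr (H / \<epsilon> + 2) / 2"
    using E(2) unfolding \<delta> by simp
qed

lemma random_linear_code_list_decodable_prob:
  fixes \<epsilon> \<gamma> p :: real
  assumes p: "0 < p" "p < 1/2" and \<gamma>: "0 < \<gamma>" "\<gamma> \<le> \<epsilon>\<^sup>2 / 2"
    and n: "2 \<le> \<gamma> * real n" "2 \<le> (\<epsilon> - \<gamma>) * real n" "8 \<le> \<epsilon> * real n"
      "real n \<le> 2 powr (\<gamma> * real n / 4)"
    and k: "real k = (1 - bin_entropy p - \<epsilon>) * real n"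
  shows "1 - 2 powr (- (\<gamma> * real n / 4))
    \<le> measure_pmf.prob (random_gens n k) {bs. list_decodable n p (bin_entropy p / \<epsilon> + 2) (lin_span n bs)}"
proof -
  define H where "H = bin_entropy p"
  define q where "q = (2::real) powr ((\<epsilon> - \<gamma>) * real n)"
  define T where "T = (2::real) powr (\<gamma> * real n / 2)"
  define U where "U = (2::real) powr (H * real n)"
  have k': "real k = (1 - H - \<epsilon>) * real n"
    using k by (simp add: H_def)
  have "0 < H"
    using p by (simp add: H_def bin_entropy_pos)
  have "0 < real n"
    using n(1) by (cases "n = 0") auto
  have "0 < \<epsilon> * real n"
    using n(3) by linarith
  have "0 \<le> (1 - H - \<epsilon>) * real n"
    using k' of_nat_0_le_iff[of k] by linarith
  then have "H + \<epsilon> \<le> 1"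
    using \<open>0 < real n\<close> by (simp add: zero_le_mult_iff)
  have "0 < H * real n"
    using \<open>0 < H\<close> \<open>0 < real n\<close> by simp
  then have "real k \<le> real n"
    using k' \<open>0 < \<epsilon> * real n\<close> by (simp add: algebra_simps)
  have "H / \<epsilon> + 2 \<ge> 1"
    using \<open>0 < \<epsilon> * real n\<close> \<open>0 < real n\<close> \<open>0 < H\<close> by (simp add: zero_less_mult_iff)
  have "q \<ge> 4"
    using powr_mono[of 2 "(\<epsilon> - \<gamma>) * real n" 2] n(2) by (simp add: q_def)
  have ball: "\<And>c. c \<in> vecs n \<Longrightarrow> real (card (hball n c (p * real n))) \<le> U"
    unfolding U_def H_def using p by (intro card_hball_le) auto
  note bounds = code_parameter_bounds[OF \<gamma> \<open>0 < H\<close> \<open>H + \<epsilon> \<le> 1\<close> n(1,3) k', folded q_def T_def U_def]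
  have "list_decodable n p (H / \<epsilon> + 2) (lin_span n bs)"
    if "bs \<in> gen_lists n k" "good_gens n p q T bs" for bs
    using good_gens_list_decodable[OF \<open>q \<ge> 4\<close> _ _ \<open>H / \<epsilon> + 2 \<ge> 1\<close> ball bounds] that
    by (auto simp: gen_lists_def T_def U_def)
  then have "1 - real k / T \<le> measure_pmf.prob (random_gens n k) {bs. list_decodable n p (H / \<epsilon> + 2) (lin_span n bs)}"
    using \<open>q \<ge> 4\<close> by (intro prob_ge_if_good_gens[where q = q and p = p]) (auto simp: T_def)
  moreover have "real k / T \<le> 2 powr (- (\<gamma> * real n / 4))"
    using \<open>real k \<le> real n\<close> n(4) divide_right_mono[of "real k" "2 powr (\<gamma> * real n / 4)" T]
    by (simp add: T_def powr_diff[symmetric])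
  ultimately show ?thesis
    unfolding H_def by linarith
qed

theorem theorem3:
  fixes \<epsilon> :: real
  assumes "\<epsilon> > 0"
  shows "\<exists>c > 0. \<forall>p. 0 < p \<and> p < 1/2 \<longrightarrow>
           (\<exists>N. \<forall>n k. n \<ge> N \<and> real k = (1 - bin_entropy p - \<epsilon>) * real n \<longrightarrow>
              measure_pmf.prob (random_gens n k)
                 {bs. list_decodable n p (bin_entropy p / \<epsilon> + 2) (lin_span n bs)}
               \<ge> 1 - exp (- c * real n))"
proof -
  define e where "e = min \<epsilon> 1"
  define \<gamma> where "\<gamma> = e\<^sup>2 / 2"
  have "0 < e" "e \<le> 1" "e \<le> \<epsilon>"
    using assms by (auto simp: e_def)
  then have "e\<^sup>2 \<le> e" "e\<^sup>2 \<le> \<epsilon>\<^sup>2"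
    by (simp_all add: power2_eq_square mult_le_cancel_left1 mult_mono)
  then have "0 < \<gamma>" "\<gamma> \<le> \<epsilon>\<^sup>2 / 2" "\<gamma> < \<epsilon>"
    using \<open>0 < e\<close> \<open>e \<le> \<epsilon>\<close> by (simp_all add: \<gamma>_def)
  have "\<forall>\<^sub>F n in sequentially. 2 \<le> \<gamma> * real n \<and> 2 \<le> (\<epsilon> - \<gamma>) * real n \<and> 8 \<le> \<epsilon> * real n
      \<and> real n \<le> 2 powr (\<gamma> * real n / 4)"
    using assms \<open>0 < \<gamma>\<close> \<open>\<gamma> < \<epsilon>\<close> by (intro eventually_conj; real_asymp)
  then obtain N where N: "\<And>n. n \<ge> N \<Longrightarrow> 2 \<le> \<gamma> * real n \<and> 2 \<le> (\<epsilon> - \<gamma>) * real n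
      \<and> 8 \<le> \<epsilon> * real n \<and> real n \<le> 2 powr (\<gamma> * real n / 4)"
    unfolding eventually_sequentially by blast
  have "2 powr (- (\<gamma> * real n / 4)) = exp (- (\<gamma> * ln 2 / 4) * real n)" for n
    by (simp add: powr_def)
  then show ?thesis
    using \<open>0 < \<gamma>\<close> \<open>\<gamma> \<le> \<epsilon>\<^sup>2 / 2\<close> N random_linear_code_list_decodable_prob[of _ \<gamma> \<epsilon>]
    by (intro exI[of _ "\<gamma> * ln 2 / 4"] conjI allI impI exI[of _ N]) auto
qed

end
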